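(* Let $N\geq3$, $a_c=\frac{N-2}{2}$, $a<a_c$, $a\leq b<a+1$, and $p=\frac{N+2(1+a-b)}{N-2(1+a-b)}$. There exist constants $0<c_1\leq c_2$ (depending only on $N,a,b$) such that for all $\tau_1,\tau_2>0$ with $\tau_1\neq\tau_2$, $$c_1\Big(\frac{\min\{\tau_1,\tau_2\}}{\max\{\tau_1,\tau_2\}}\Big)^{a_c-a}\leq\langle W_{\tau_1},W_{\tau_2}\rangle_{D^{1,2}_a(\mathbb{R}^N)}\leq c_2\Big(\frac{\min\{\tau_1,\tau_2\}}{\max\{\tau_1,\tau_2\}}\Big)^{a_c-a}.$$ Equivalently, on the cylinder, $c_1e^{-(a_c-a)|s_1-s_2|}\leq\langle\Psi_{s_1},\Psi_{s_2}\rangle_{H^1(\mathcal{C})}\leq c_2e^{-(a_c-a)|s_1-s_2|}$ for all $s_1\neq s_2$.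
   Context: $D^{1,2}_a(\mathbb{R}^N)=\{u\in\dot W^{1,2}(\mathbb{R}^N)\mid\int|x|^{-2a}|\nabla u|^2<\infty\}$ with inner product $\langle u,v\rangle_{D^{1,2}_a}=\int|x|^{-2a}\nabla u\cdot\nabla v\,dx$. $W(x)=(2(p+1)(a_c-a)^2)^{\frac{1}{p-1}}(1+|x|^{(a_c-a)(p-1)})^{-\frac{2}{p-1}}$, $W_\tau(x)=\tau^{a_c-a}W(\tau x)$. $\mathcal{C}=\mathbb{R}\times\mathbb{S}^{N-1}$, $H^1(\mathcal{C})$ with inner product $\int_{\mathcal{C}}(\nabla w\cdot\nabla v+(a_c-a)^2wv)d\mu$; $\Psi(t)=\big(\frac{(p+1)(a_c-a)^2}{2}\big)^{\frac{1}{p-1}}\big(\cosh(\frac{(a_c-a)(p-1)}{2}t)\big)^{-\frac{2}{p-1}}$, $\Psi_s(t)=\Psi(t-s)$; $\Psi_{s}$ corresponds to $W_\tau$ with $s=\ln\tau$ under the isometry $u(x)=|x|^{-(a_c-a)}v(-\ln|x|,x/|x|)$ between $D^{1,2}_a(\mathbb{R}^N)$ and $H^1(\mathcal{C})$. *)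

theory Defs
  imports "HOL-Analysis.Analysis"
begin

definition a_crit :: "nat \<Rightarrow> real" where
  "a_crit N = (real N - 2) / 2"

definition p_exp :: "nat \<Rightarrow> real \<Rightarrow> real \<Rightarrow> real" where
  "p_exp N a b = (real N + 2 * (1 + a - b)) / (real N - 2 * (1 + a - b))"

text \<open>The extremal function W on R^N (N = DIM('a)).\<close>
definition W_fun :: "nat \<Rightarrow> real \<Rightarrow> real \<Rightarrow> 'a::euclidean_space \<Rightarrow> real" where
  "W_fun N a b x =
     (let p = p_exp N a b; d = a_crit N - a in
      (2 * (p + 1) * d\<^sup>2) powr (1 / (p - 1)) *
      (1 + norm x powr (d * (p - 1))) powr (- 2 / (p - 1)))"

definition W_tau :: "nat \<Rightarrow> real \<Rightarrow> real \<Rightarrow> real \<Rightarrow> 'a::euclidean_space \<Rightarrow> real" where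
  "W_tau N a b \<tau> x = \<tau> powr (a_crit N - a) * W_fun N a b (\<tau> *\<^sub>R x)"

text \<open>Classical gradient (defined wherever the function is Frechet differentiable).\<close>
definition grad :: "('a::real_inner \<Rightarrow> real) \<Rightarrow> 'a \<Rightarrow> 'a" where
  "grad f x = (SOME D. GDERIV f x :> D)"

definition D12a_inner :: "real \<Rightarrow> ('a::euclidean_space \<Rightarrow> real) \<Rightarrow> ('a \<Rightarrow> real) \<Rightarrow> real" where
  "D12a_inner a u v = (\<integral>x. norm x powr (- 2 * a) * (grad u x \<bullet> grad v x) \<partial>lborel)"

end

(* Both W_tau1 and W_tau2 are rescalings tau^d U(tau |x|) of one radial profile U(s) = C (1 + s^q)^e,
   where d = a_c - a and q e = -2d. In polar coordinates, and since N - 1 - 2a = 2d + 1, their inner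
   product is |S^(N-1)| times
     int_0^oo r^(2d+1) tau1^(d+1) phi(tau1 r) tau2^(d+1) phi(tau2 r) dr,     phi = -U'.
   The slope phi decays exactly like s^-(2d+1): s^(2d+1) phi(s) is bounded, and bounded below for s >= 1.
   For sigma = min < tau = max, bounding (tau r)^(2d+1) phi(tau r) from above leaves
   tau^-d sigma^(d+1) int phi(sigma r) dr = (sigma/tau)^d int phi, while restricting to sigma r in [1,2],
   where both factors are bounded below, gives the same order (sigma/tau)^d from below. *)

theory Submission
  imports Defs
begin

lemma distr_norm_lborel:
  "distr (lborel :: 'a::euclidean_space measure) borel norm =
     density lborel (\<lambda>r. ennreal (real DIM('a) * unit_ball_vol DIM('a) * r ^ (DIM('a) - 1)) * indicator {0..} r)"
  (is "?M = density lborel ?\<rho>")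
proof -
  have sets_borel: "sets (borel :: real measure) = sigma_sets UNIV (range atMost)"
    by (subst borel_eq_atMost) simp
  have cdf: "emeasure M {..x} = (if x < 0 then 0 else ennreal (unit_ball_vol DIM('a) * x ^ DIM('a)))"
    if "M = ?M \<or> M = density lborel ?\<rho>" for M x
    using that
  proof
    assume "M = ?M"
    moreover have "(norm -` {..x} :: 'a set) = (if x < 0 then {} else cball 0 x)"
      by (auto dest: order_trans[OF norm_ge_zero])
    ultimately show ?thesis
      by (auto simp: emeasure_distr emeasure_cball)
  next
    assume M: "M = density lborel ?\<rho>"
    have "emeasure M {..x} = (\<integral>\<^sup>+r. ennreal (real DIM('a) * unit_ball_vol DIM('a) * r ^ (DIM('a) - 1))
        * indicator {0..x} r \<partial>lborel)"
      unfolding M by (subst emeasure_density) (auto intro!: nn_integral_cong simp: indicator_def)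
    also have "\<dots> = (if x < 0 then 0 else ennreal (unit_ball_vol DIM('a) * x ^ DIM('a)))"
    proof (cases "x < 0")
      case False
      then have "(\<integral>\<^sup>+r. ennreal (real DIM('a) * unit_ball_vol DIM('a) * r ^ (DIM('a) - 1))
          * indicator {0..x} r \<partial>lborel)
          = ennreal (unit_ball_vol DIM('a) * x ^ DIM('a) - unit_ball_vol DIM('a) * 0 ^ DIM('a))"
        by (intro nn_integral_FTC_Icc) (auto intro!: derivative_eq_intros simp: algebra_simps)
      with False show ?thesis by simp
    qed simp
    finally show ?thesis .
  qed
  show ?thesis
  proof (rule measure_eqI_generator_eq_countable[where E = "range atMost" and \<Omega> = UNIV
        and A = "range (\<lambda>n::nat. {..real n})"])
    show "Int_stable (range atMost :: real set set)"
      by (auto simp: Int_stable_def)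
    show "\<Union> (range (\<lambda>n::nat. {..real n})) = UNIV"
      by (auto intro: real_arch_simple)
  qed (use sets_borel cdf in auto)
qed

lemma nn_integral_radial:
  assumes [measurable]: "g \<in> borel_measurable borel"
  shows "(\<integral>\<^sup>+x. g (norm x) \<partial>(lborel :: 'a::euclidean_space measure)) =
    (\<integral>\<^sup>+r. ennreal (real DIM('a) * unit_ball_vol DIM('a) * r ^ (DIM('a) - 1)) * indicator {0..} r * g r \<partial>lborel)"
proof -
  have "(\<integral>\<^sup>+x. g (norm x) \<partial>(lborel :: 'a measure))
      = (\<integral>\<^sup>+r. g r \<partial>distr (lborel :: 'a measure) borel norm)"
    by (simp add: nn_integral_distr)
  then show ?thesis
    unfolding distr_norm_lborel by (simp add: nn_integral_density)
qed

lemma gderiv_unique: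
  fixes f :: "'a::real_inner \<Rightarrow> real"
  assumes "GDERIV f x :> D1" "GDERIV f x :> D2"
  shows "D1 = D2"
proof -
  have "(\<lambda>h. h \<bullet> D1) = (\<lambda>h. h \<bullet> D2)"
    using assms unfolding gderiv_def by (rule has_derivative_unique)
  then have "(D1 - D2) \<bullet> (D1 - D2) = 0"
    by (metis inner_diff_right right_minus_eq)
  then show ?thesis by simp
qed

lemma grad_eqI:
  fixes f :: "'a::real_inner \<Rightarrow> real"
  assumes "GDERIV f x :> D"
  shows "grad f x = D"
  unfolding grad_def using assms gderiv_unique by (intro some_equality) auto

lemma grad_radial:
  fixes x :: "'a::real_inner"
  assumes "x \<noteq> 0" "(g has_real_derivative g') (at (norm x))"
  shows "grad (\<lambda>x. g (norm x)) x = g' *\<^sub>R sgn x"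
  by (rule grad_eqI, rule GDERIV_DERIV_compose[OF GDERIV_norm[OF assms(1)] assms(2)])

lemma D12a_inner_radial:
  fixes g1 g2 g1' g2' :: "real \<Rightarrow> real"
  assumes g1: "\<And>r. 0 < r \<Longrightarrow> (g1 has_real_derivative g1' r) (at r)"
    and g2: "\<And>r. 0 < r \<Longrightarrow> (g2 has_real_derivative g2' r) (at r)"
    and nonneg: "\<And>r. 0 < r \<Longrightarrow> 0 \<le> g1' r * g2' r"
    and [measurable]: "g1' \<in> borel_measurable borel" "g2' \<in> borel_measurable borel"
  shows "D12a_inner a (\<lambda>x::'a::euclidean_space. g1 (norm x)) (\<lambda>x. g2 (norm x)) =
    enn2real (\<integral>\<^sup>+r. ennreal (real DIM('a) * unit_ball_vol DIM('a) * r ^ (DIM('a) - 1) *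
      r powr (- 2 * a) * (g1' r * g2' r)) * indicator {0<..} r \<partial>lborel)"
proof -
  define h where "h r = r powr (- 2 * a) * (g1' r * g2' r) * indicator {0<..} r" for r
  have h_nonneg: "0 \<le> h r" for r
    using nonneg by (simp add: h_def indicator_def)
  have integrand: "norm x powr (- 2 * a) * (grad (\<lambda>x. g1 (norm x)) x \<bullet> grad (\<lambda>x. g2 (norm x)) x)
      = h (norm x)" for x :: 'a
  proof (cases "x = 0")
    case False
    then have "grad (\<lambda>x. g1 (norm x)) x = g1' (norm x) *\<^sub>R sgn x"
      and "grad (\<lambda>x. g2 (norm x)) x = g2' (norm x) *\<^sub>R sgn x"
      and "sgn x \<bullet> sgn x = 1"
      by (auto intro!: grad_radial g1 g2 simp: dot_square_norm norm_sgn)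
    with False show ?thesis
      by (simp add: h_def)
  qed (simp add: h_def) \<comment> \<open>at the origin the weight is 0 powr (-2a) = 0, whatever grad is there\<close>
  have "D12a_inner a (\<lambda>x::'a. g1 (norm x)) (\<lambda>x. g2 (norm x))
      = enn2real (\<integral>\<^sup>+x. ennreal (h (norm x)) \<partial>(lborel :: 'a measure))"
    unfolding D12a_inner_def integrand using h_nonneg
    by (intro integral_eq_nn_integral) (auto simp: h_def)
  also have "(\<integral>\<^sup>+x. ennreal (h (norm x)) \<partial>(lborel :: 'a measure))
      = (\<integral>\<^sup>+r. ennreal (real DIM('a) * unit_ball_vol DIM('a) * r ^ (DIM('a) - 1))
          * indicator {0..} r * ennreal (h r) \<partial>lborel)"
    by (rule nn_integral_radial) (simp add: h_def)
  also have "\<dots> = (\<integral>\<^sup>+r. ennreal (real DIM('a) * unit_ball_vol DIM('a) * r ^ (DIM('a) - 1) *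
      r powr (- 2 * a) * (g1' r * g2' r)) * indicator {0<..} r \<partial>lborel)"
    using nonneg by (intro nn_integral_cong) (auto simp: h_def indicator_def ennreal_mult' mult.assoc)
  finally show ?thesis .
qed

definition interaction :: "(real \<Rightarrow> real) \<Rightarrow> real \<Rightarrow> real \<Rightarrow> real \<Rightarrow> ennreal" where
  "interaction \<phi> d \<tau>1 \<tau>2 = (\<integral>\<^sup>+r. ennreal (r powr (2 * d + 1) *
     (\<tau>1 powr (d + 1) * \<phi> (\<tau>1 * r)) * (\<tau>2 powr (d + 1) * \<phi> (\<tau>2 * r))) * indicator {0<..} r \<partial>lborel)"

lemma interaction_commute: "interaction \<phi> d \<tau>1 \<tau>2 = interaction \<phi> d \<tau>2 \<tau>1"
  unfolding interaction_def by (simp add: mult_ac)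

lemma interaction_integrand_eq:
  fixes r \<tau> \<sigma> d x y :: real
  assumes "0 < r" "0 < \<tau>"
  shows "r powr (2 * d + 1) * (\<tau> powr (d + 1) * x) * (\<sigma> powr (d + 1) * y)
    = \<tau> powr (- d) * \<sigma> powr (d + 1) * ((\<tau> * r) powr (2 * d + 1) * x) * y"
proof -
  have "\<tau> powr (d + 1) = \<tau> powr (- d) * \<tau> powr (2 * d + 1)"
    by (simp flip: powr_add)
  with assms show ?thesis
    by (simp add: powr_mult mult_ac)
qed

lemma powr_ratio_eq:
  fixes \<sigma> \<tau> d :: real
  assumes "0 < \<sigma>" "0 < \<tau>"
  shows "\<tau> powr (- d) * \<sigma> powr (d + 1) / \<sigma> = (\<sigma> / \<tau>) powr d"
proof -
  have "\<sigma> powr (d + 1) = \<sigma> powr d * \<sigma>"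
    using assms by (simp add: powr_add)
  moreover have "(\<sigma> / \<tau>) powr d = \<sigma> powr d / \<tau> powr d"
    using assms by (simp add: powr_divide)
  ultimately show ?thesis
    using assms by (simp add: powr_minus field_simps)
qed

lemma nn_integral_half_line_scale:
  fixes f :: "real \<Rightarrow> ennreal"
  assumes [measurable]: "f \<in> borel_measurable borel" and "0 < c"
  shows "(\<integral>\<^sup>+r. f (c * r) * indicator {0<..} r \<partial>lborel)
    = ennreal (1 / c) * (\<integral>\<^sup>+s. f s * indicator {0<..} s \<partial>lborel)"
proof -
  have "(\<integral>\<^sup>+s. f s * indicator {0<..} s \<partial>lborel)
      = ennreal c * (\<integral>\<^sup>+r. f (c * r) * indicator {0<..} r \<partial>lborel)"
    using nn_integral_real_affine[of "\<lambda>s. f s * indicator {0<..} s" c 0] assms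
    by (simp add: indicator_def zero_less_mult_iff)
  moreover have "ennreal (1 / c) * ennreal c = 1"
    using assms by (simp flip: ennreal_mult)
  ultimately show ?thesis
    by (metis mult.assoc mult_1)
qed

lemma interaction_le:
  assumes [measurable]: "\<phi> \<in> borel_measurable borel"
    and nonneg: "\<And>s. 0 \<le> \<phi> s"
    and integral: "(\<integral>\<^sup>+s. ennreal (\<phi> s) * indicator {0<..} s \<partial>lborel) = ennreal I"
    and decay: "\<And>s. 0 < s \<Longrightarrow> s powr (2 * d + 1) * \<phi> s \<le> A"
    and "0 < \<sigma>" "\<sigma> \<le> \<tau>"
  shows "interaction \<phi> d \<tau> \<sigma> \<le> ennreal (A * I * (\<sigma> / \<tau>) powr d)"
proof -
  have "0 < \<tau>" using assms by simp
  have "0 \<le> A"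
    using decay[of 1] nonneg[of 1] by simp
  define K where "K = \<tau> powr (- d) * \<sigma> powr (d + 1)"
  have "0 \<le> K" by (simp add: K_def)
  have "interaction \<phi> d \<tau> \<sigma>
      \<le> (\<integral>\<^sup>+r. ennreal (K * A) * (ennreal (\<phi> (\<sigma> * r)) * indicator {0<..} r) \<partial>lborel)"
    unfolding interaction_def
  proof (intro nn_integral_mono)
    fix r :: real
    show "ennreal (r powr (2 * d + 1) * (\<tau> powr (d + 1) * \<phi> (\<tau> * r)) * (\<sigma> powr (d + 1) * \<phi> (\<sigma> * r)))
        * indicator {0<..} r \<le> ennreal (K * A) * (ennreal (\<phi> (\<sigma> * r)) * indicator {0<..} r)"
    proof (cases "0 < r")
      case True
      have "r powr (2 * d + 1) * (\<tau> powr (d + 1) * \<phi> (\<tau> * r)) * (\<sigma> powr (d + 1) * \<phi> (\<sigma> * r))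
          = K * ((\<tau> * r) powr (2 * d + 1) * \<phi> (\<tau> * r)) * \<phi> (\<sigma> * r)"
        using True \<open>0 < \<tau>\<close> by (simp add: interaction_integrand_eq K_def)
      also have "\<dots> \<le> K * A * \<phi> (\<sigma> * r)"
        using True \<open>0 < \<tau>\<close> \<open>0 \<le> K\<close> by (intro mult_right_mono mult_left_mono decay nonneg) auto
      finally show ?thesis
        using True nonneg by (simp add: ennreal_leI flip: ennreal_mult'')
    qed simp
  qed
  also have "\<dots> = ennreal (K * A) * (ennreal (1 / \<sigma>) * ennreal I)"
    using \<open>0 < \<sigma>\<close>
    by (simp add: nn_integral_cmult nn_integral_half_line_scale[where f = "\<lambda>s. ennreal (\<phi> s)"] integral)
  also have "\<dots> = ennreal (A * I * (K / \<sigma>))"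
    using \<open>0 < \<sigma>\<close> \<open>0 \<le> K\<close> \<open>0 \<le> A\<close>
    by (simp add: mult.assoc flip: ennreal_mult') (simp add: mult_ac)
  finally show ?thesis
    using assms by (simp add: K_def powr_ratio_eq)
qed

lemma growth_lower_bound_1_2:
  fixes \<phi> :: "real \<Rightarrow> real"
  assumes nonneg: "\<And>s. 0 \<le> \<phi> s"
    and growth: "\<And>s. 1 \<le> s \<Longrightarrow> B \<le> s powr (2 * d + 1) * \<phi> s"
    and "0 \<le> d" "1 \<le> s" "s \<le> 2"
  shows "B * 2 powr - (2 * d + 1) \<le> \<phi> s"
proof -
  have "B \<le> s powr (2 * d + 1) * \<phi> s"
    using \<open>1 \<le> s\<close> by (rule growth)
  also have "\<dots> \<le> 2 powr (2 * d + 1) * \<phi> s"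
    using assms by (intro mult_right_mono powr_mono2 nonneg) auto
  finally have "B * 2 powr - (2 * d + 1) \<le> \<phi> s * (2 powr (2 * d + 1) * 2 powr - (2 * d + 1))"
    by (simp add: mult_right_mono mult_ac)
  then show ?thesis
    by (simp flip: powr_add)
qed

lemma interaction_ge:
  assumes nonneg: "\<And>s. 0 \<le> \<phi> s"
    and growth: "\<And>s. 1 \<le> s \<Longrightarrow> B \<le> s powr (2 * d + 1) * \<phi> s"
    and "0 \<le> B" "0 \<le> d" "0 < \<sigma>" "\<sigma> \<le> \<tau>"
  shows "ennreal (B * B * 2 powr - (2 * d + 1) * (\<sigma> / \<tau>) powr d) \<le> interaction \<phi> d \<tau> \<sigma>"
proof -
  have "0 < \<tau>" using assms by simp
  define K where "K = \<tau> powr (- d) * \<sigma> powr (d + 1)"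
  have "0 \<le> K" by (simp add: K_def)
  define L where "L = K * (B * (B * 2 powr - (2 * d + 1)))"
  have pointwise: "L \<le> r powr (2 * d + 1) * (\<tau> powr (d + 1) * \<phi> (\<tau> * r)) * (\<sigma> powr (d + 1) * \<phi> (\<sigma> * r))"
    if r: "r \<in> {1/\<sigma>..2/\<sigma>}" for r
  proof -
    have "1 \<le> \<sigma> * r" "\<sigma> * r \<le> 2" "0 < r"
      using r \<open>0 < \<sigma>\<close> by (auto simp: field_simps less_le_trans[of 0 "1/\<sigma>"])
    moreover have "\<sigma> * r \<le> \<tau> * r"
      using \<open>0 < r\<close> assms by simp
    ultimately have far: "B \<le> (\<tau> * r) powr (2 * d + 1) * \<phi> (\<tau> * r)"
      by (intro growth) linarith
    have near: "B * 2 powr - (2 * d + 1) \<le> \<phi> (\<sigma> * r)"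
      using nonneg growth \<open>0 \<le> d\<close> \<open>1 \<le> \<sigma> * r\<close> \<open>\<sigma> * r \<le> 2\<close> by (rule growth_lower_bound_1_2)
    have "L \<le> K * (((\<tau> * r) powr (2 * d + 1) * \<phi> (\<tau> * r)) * \<phi> (\<sigma> * r))"
      unfolding L_def using far near \<open>0 \<le> K\<close> \<open>0 \<le> B\<close>
      by (intro mult_left_mono mult_mono) auto
    then show ?thesis
      unfolding interaction_integrand_eq[OF \<open>0 < r\<close> \<open>0 < \<tau>\<close>] K_def by (simp add: mult_ac)
  qed
  have "ennreal (L * (1 / \<sigma>)) = (\<integral>\<^sup>+r. ennreal L * indicator {1/\<sigma>..2/\<sigma>} r \<partial>lborel)"
    using \<open>0 < \<sigma>\<close> \<open>0 \<le> K\<close> \<open>0 \<le> B\<close>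
    by (simp add: nn_integral_cmult_indicator L_def divide_right_mono flip: ennreal_mult diff_divide_distrib)
  also have "\<dots> \<le> interaction \<phi> d \<tau> \<sigma>"
    unfolding interaction_def
  proof (intro nn_integral_mono)
    fix r :: real
    show "ennreal L * indicator {1/\<sigma>..2/\<sigma>} r
        \<le> ennreal (r powr (2 * d + 1) * (\<tau> powr (d + 1) * \<phi> (\<tau> * r)) * (\<sigma> powr (d + 1) * \<phi> (\<sigma> * r)))
          * indicator {0<..} r"
      using pointwise[of r] \<open>0 < \<sigma>\<close>
      by (cases "r \<in> {1/\<sigma>..2/\<sigma>}") (auto simp: ennreal_leI less_le_trans[of 0 "1/\<sigma>"])
  qed
  also have "L * (1 / \<sigma>) = B * B * 2 powr - (2 * d + 1) * (\<sigma> / \<tau>) powr d"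
    unfolding L_def K_def powr_ratio_eq[OF \<open>0 < \<sigma>\<close> \<open>0 < \<tau>\<close>, symmetric] by simp
  finally show ?thesis .
qed

lemma interaction_bounds:
  assumes [measurable]: "\<phi> \<in> borel_measurable borel"
    and nonneg: "\<And>s. 0 \<le> \<phi> s"
    and integral: "(\<integral>\<^sup>+s. ennreal (\<phi> s) * indicator {0<..} s \<partial>lborel) = ennreal I" "0 \<le> I"
    and decay: "\<And>s. 0 < s \<Longrightarrow> s powr (2 * d + 1) * \<phi> s \<le> A"
    and growth: "\<And>s. 1 \<le> s \<Longrightarrow> B \<le> s powr (2 * d + 1) * \<phi> s"
    and "0 < B" "0 \<le> d"
  shows "\<exists>c1 c2. 0 < c1 \<and> c1 \<le> c2 \<and> (\<forall>\<tau>1 \<tau>2. 0 < \<tau>1 \<longrightarrow> 0 < \<tau>2 \<longrightarrow>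
      c1 * (min \<tau>1 \<tau>2 / max \<tau>1 \<tau>2) powr d \<le> enn2real (interaction \<phi> d \<tau>1 \<tau>2) \<and>
      enn2real (interaction \<phi> d \<tau>1 \<tau>2) \<le> c2 * (min \<tau>1 \<tau>2 / max \<tau>1 \<tau>2) powr d)"
proof -
  define c1 where "c1 = B * B * 2 powr - (2 * d + 1)"
  have "0 \<le> A"
    using decay[of 1] nonneg[of 1] by simp
  have bounds: "c1 * (min \<tau>1 \<tau>2 / max \<tau>1 \<tau>2) powr d \<le> enn2real (interaction \<phi> d \<tau>1 \<tau>2) \<and>
      enn2real (interaction \<phi> d \<tau>1 \<tau>2) \<le> A * I * (min \<tau>1 \<tau>2 / max \<tau>1 \<tau>2) powr d"
    if "0 < \<tau>1" "0 < \<tau>2" for \<tau>1 \<tau>2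
  proof -
    have "interaction \<phi> d \<tau>1 \<tau>2 = interaction \<phi> d (max \<tau>1 \<tau>2) (min \<tau>1 \<tau>2)"
      by (cases "\<tau>1 \<le> \<tau>2") (simp_all add: interaction_commute max_def min_def)
    moreover have "ennreal (c1 * (min \<tau>1 \<tau>2 / max \<tau>1 \<tau>2) powr d)
        \<le> interaction \<phi> d (max \<tau>1 \<tau>2) (min \<tau>1 \<tau>2)"
      unfolding c1_def using that assms by (intro interaction_ge) auto
    moreover have "interaction \<phi> d (max \<tau>1 \<tau>2) (min \<tau>1 \<tau>2)
        \<le> ennreal (A * I * (min \<tau>1 \<tau>2 / max \<tau>1 \<tau>2) powr d)"
      using that assms by (intro interaction_le) auto
    moreover have "0 \<le> c1" "0 \<le> A * I"
      using \<open>0 \<le> A\<close> \<open>0 \<le> I\<close> by (simp_all add: c1_def)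
    ultimately show ?thesis
      by (metis enn2real_ennreal enn2real_leI enn2real_mono ennreal_less_top le_less_trans
          mult_nonneg_nonneg powr_ge_zero)
  qed
  from bounds[of 1 1] have "c1 \<le> A * I"
    by simp
  moreover have "0 < c1"
    using \<open>0 < B\<close> by (simp add: c1_def)
  ultimately show ?thesis
    using bounds by blast
qed

(* W x = bubble C q e (norm x) with q = (a_c - a)(p - 1), e = -2 / (p - 1) and
   C = (2 (p + 1) (a_c - a)^2) powr (1 / (p - 1)). *)
definition bubble :: "real \<Rightarrow> real \<Rightarrow> real \<Rightarrow> real \<Rightarrow> real" where
  "bubble C q e s = C * (1 + s powr q) powr e"

definition bubble_slope :: "real \<Rightarrow> real \<Rightarrow> real \<Rightarrow> real \<Rightarrow> real" where
  "bubble_slope C q e s = - (C * q * e) * s powr (q - 1) * (1 + s powr q) powr (e - 1)"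

lemma has_real_derivative_bubble:
  assumes "0 < s"
  shows "(bubble C q e has_real_derivative - bubble_slope C q e s) (at s)"
proof -
  have "((\<lambda>s. 1 + s powr q) has_real_derivative q * s powr (q - 1)) (at s)"
    using assms by (auto intro!: derivative_eq_intros)
  from DERIV_cmult[OF DERIV_fun_powr[OF this], of C e]
  show ?thesis
    unfolding bubble_def[abs_def] bubble_slope_def by (simp add: add_pos_nonneg algebra_simps)
qed

lemma continuous_bubble_slope: "0 < s \<Longrightarrow> isCont (bubble_slope C q e) s"
  unfolding bubble_slope_def[abs_def]
  by (intro continuous_intros) (auto simp: add_nonneg_eq_0_iff)

lemma tendsto_bubble_at_right_0:
  assumes "0 < q"
  shows "(bubble C q e \<longlongrightarrow> C) (at_right 0)"
proof -
  have "((\<lambda>s. s powr q) \<longlongrightarrow> 0) (at_right 0)"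
    using assms by (intro tendsto_zero_powrI[of _ _ _ q]) (auto intro!: tendsto_ident_at eventually_at_rightI[of 0 1])
  then have "(bubble C q e \<longlongrightarrow> C * (1 + 0) powr e) (at_right 0)"
    unfolding bubble_def[abs_def] by (intro tendsto_intros) auto
  then show ?thesis by simp
qed

lemma tendsto_bubble_at_top:
  assumes "0 < q" "e < 0"
  shows "(bubble C q e \<longlongrightarrow> 0) at_top"
proof -
  have "filterlim (\<lambda>s. 1 + s powr q) at_top at_top"
    using assms by (intro filterlim_tendsto_add_at_top[OF tendsto_const] real_powr_at_top)
  then have "((\<lambda>s. (1 + s powr q) powr e) \<longlongrightarrow> 0) at_top"
    using assms by (intro tendsto_neg_powr) auto
  then have "(bubble C q e \<longlongrightarrow> C * 0) at_top"
    unfolding bubble_def[abs_def] by (intro tendsto_intros)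
  then show ?thesis by simp
qed

lemma has_real_derivative_rescaled_bubble:
  assumes "0 < \<tau>" "0 < r"
  shows "((\<lambda>r. \<tau> powr d * bubble C q e (\<tau> * r)) has_real_derivative
      - (\<tau> powr (d + 1) * bubble_slope C q e (\<tau> * r))) (at r)"
proof -
  have "((\<lambda>r. \<tau> powr d * bubble C q e (\<tau> * r)) has_real_derivative
      \<tau> powr d * (- bubble_slope C q e (\<tau> * r) * \<tau>)) (at r)"
    using assms by (intro DERIV_cmult DERIV_chain2[OF has_real_derivative_bubble]) (auto intro!: derivative_eq_intros)
  then show ?thesis
    using assms by (simp add: powr_add mult_ac)
qed

lemma borel_measurable_bubble_slope [measurable]: "bubble_slope C q e \<in> borel_measurable borel"
  unfolding bubble_slope_def[abs_def] by measurable

lemma einterval_0_infty: "einterval 0 \<infinity> = {0<..}"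
  by (auto simp: einterval_def zero_ereal_def)

context
  fixes C q e :: real
  assumes C: "0 < C" and q: "0 < q" and e: "e < 0"
begin

lemma bubble_slope_factor_pos: "0 < - (C * q * e)"
  using C q e by (simp add: mult_pos_neg)

lemma bubble_slope_nonneg: "0 \<le> bubble_slope C q e s"
  unfolding bubble_slope_def using bubble_slope_factor_pos by (intro mult_nonneg_nonneg) auto

lemma bubble_slope_decay_eq:
  "s powr (1 - q * e) * bubble_slope C q e s
    = - (C * q * e) * (s powr (1 - q * e) * s powr (q - 1)) * (1 + s powr q) powr (e - 1)"
  by (simp add: bubble_slope_def mult_ac)

lemma bubble_slope_decay_upper:
  assumes "0 < s"
  shows "s powr (1 - q * e) * bubble_slope C q e s \<le> - (C * q * e)"
proof -
  have "s powr (1 - q * e) * bubble_slope C q e s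
      \<le> - (C * q * e) * (s powr (1 - q * e) * s powr (q - 1)) * (s powr q) powr (e - 1)"
    unfolding bubble_slope_decay_eq using assms e bubble_slope_factor_pos
    by (intro mult_left_mono powr_mono2') (auto intro: mult_nonpos_nonneg)
  also have "\<dots> = - (C * q * e) * s powr 0"
    by (simp add: powr_powr mult.assoc flip: powr_add) (simp add: algebra_simps)
  finally show ?thesis
    using assms by simp
qed

lemma bubble_slope_decay_lower:
  assumes "1 \<le> s"
  shows "- (C * q * e) * 2 powr (e - 1) \<le> s powr (1 - q * e) * bubble_slope C q e s"
proof -
  have "1 \<le> s powr q"
    using assms q by (simp add: ge_one_powr_ge_zero)
  have "- (C * q * e) * 2 powr (e - 1) = - (C * q * e) * (s powr (1 - q * e) * s powr (q - 1)) * (2 * s powr q) powr (e - 1)"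
    using assms by (simp add: powr_powr powr_mult mult.assoc flip: powr_add) (simp add: algebra_simps)
  also have "\<dots> \<le> s powr (1 - q * e) * bubble_slope C q e s"
    unfolding bubble_slope_decay_eq using \<open>1 \<le> s powr q\<close> e bubble_slope_factor_pos
    by (intro mult_left_mono powr_mono2') (auto intro: mult_nonpos_nonneg)
  finally show ?thesis .
qed

lemma nn_integral_bubble_slope:
  "(\<integral>\<^sup>+s. ennreal (bubble_slope C q e s) * indicator {0<..} s \<partial>lborel) = ennreal C"
proof -
  have lim_0: "(((\<lambda>s. - bubble C q e s) \<circ> real_of_ereal) \<longlongrightarrow> - C) (at_right 0)"
    using tendsto_minus[OF tendsto_bubble_at_right_0[OF q]]
    unfolding zero_ereal_def ereal_tendsto_simps .
  have lim_top: "(((\<lambda>s. - bubble C q e s) \<circ> real_of_ereal) \<longlongrightarrow> 0) (at_left \<infinity>)"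
    using tendsto_minus[OF tendsto_bubble_at_top[OF q e]]
    unfolding ereal_tendsto_simps by simp
  have "set_integrable lborel (einterval 0 \<infinity>) (bubble_slope C q e)"
    and "(LBINT s=0..\<infinity>. bubble_slope C q e s) = 0 - (- C)"
    by (rule interval_integral_FTC_nonneg[OF _ _ _ _ lim_0 lim_top];
        auto intro!: DERIV_minus[THEN DERIV_cong] has_real_derivative_bubble continuous_bubble_slope
          simp: bubble_slope_nonneg)+
  then have "integrable lborel (\<lambda>s. indicator {0<..} s * bubble_slope C q e s)"
    and "(\<integral>s. indicator {0<..} s * bubble_slope C q e s \<partial>lborel) = C"
    unfolding einterval_0_infty set_integrable_def interval_lebesgue_integral_0_infty
      set_lebesgue_integral_def by simp_all
  then have "(\<integral>\<^sup>+s. ennreal (indicator {0<..} s * bubble_slope C q e s) \<partial>lborel) = ennreal C"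
    by (simp add: nn_integral_eq_integral bubble_slope_nonneg)
  then show ?thesis
    by (simp add: indicator_mult_ennreal mult.commute)
qed

lemma D12a_inner_rescaled_bubbles:
  assumes dim: "2 * d + 1 = real DIM('a) - 1 - 2 * a" and "0 < \<tau>1" "0 < \<tau>2"
  shows "D12a_inner a (\<lambda>x::'a::euclidean_space. \<tau>1 powr d * bubble C q e (\<tau>1 * norm x))
      (\<lambda>x. \<tau>2 powr d * bubble C q e (\<tau>2 * norm x))
    = real DIM('a) * unit_ball_vol DIM('a) * enn2real (interaction (bubble_slope C q e) d \<tau>1 \<tau>2)"
proof -
  have radial_weight: "r ^ (DIM('a) - 1) * r powr (- 2 * a) = r powr (2 * d + 1)" if "0 < r" for r :: real
    using that by (simp add: dim powr_realpow[symmetric] of_nat_diff flip: powr_add)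
  have "D12a_inner a (\<lambda>x::'a. \<tau>1 powr d * bubble C q e (\<tau>1 * norm x))
      (\<lambda>x. \<tau>2 powr d * bubble C q e (\<tau>2 * norm x))
    = enn2real (\<integral>\<^sup>+r. ennreal (real DIM('a) * unit_ball_vol DIM('a) * r ^ (DIM('a) - 1) * r powr (- 2 * a) *
        (- (\<tau>1 powr (d + 1) * bubble_slope C q e (\<tau>1 * r)) * - (\<tau>2 powr (d + 1) * bubble_slope C q e (\<tau>2 * r))))
        * indicator {0<..} r \<partial>lborel)"
    using assms C q e
    by (intro D12a_inner_radial has_real_derivative_rescaled_bubble) (auto simp: bubble_slope_nonneg)
  also have "\<dots> = enn2real (ennreal (real DIM('a) * unit_ball_vol DIM('a)) * interaction (bubble_slope C q e) d \<tau>1 \<tau>2)"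
    unfolding interaction_def
  proof (subst nn_integral_cmult[symmetric], simp, intro arg_cong[where f = enn2real] nn_integral_cong)
    fix r :: real
    show "ennreal (real DIM('a) * unit_ball_vol DIM('a) * r ^ (DIM('a) - 1) * r powr (- 2 * a) *
        (- (\<tau>1 powr (d + 1) * bubble_slope C q e (\<tau>1 * r)) * - (\<tau>2 powr (d + 1) * bubble_slope C q e (\<tau>2 * r))))
        * indicator {0<..} r
      = ennreal (real DIM('a) * unit_ball_vol DIM('a)) * (ennreal (r powr (2 * d + 1) *
        (\<tau>1 powr (d + 1) * bubble_slope C q e (\<tau>1 * r)) * (\<tau>2 powr (d + 1) * bubble_slope C q e (\<tau>2 * r)))
        * indicator {0<..} r)"
    proof (cases "0 < r")
      case True
      then show ?thesis
        using radial_weight[OF True]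
        by (simp add: ennreal_mult' mult.assoc[symmetric]) (simp add: mult_ac ennreal_mult')
    qed simp
  qed
  finally show ?thesis
    by (simp add: enn2real_mult)
qed

lemma bubble_interaction_bounds:
  assumes qe: "q * e = - 2 * d"
  shows "\<exists>c1 c2. 0 < c1 \<and> c1 \<le> c2 \<and> (\<forall>\<tau>1 \<tau>2. 0 < \<tau>1 \<longrightarrow> 0 < \<tau>2 \<longrightarrow>
      c1 * (min \<tau>1 \<tau>2 / max \<tau>1 \<tau>2) powr d \<le> enn2real (interaction (bubble_slope C q e) d \<tau>1 \<tau>2) \<and>
      enn2real (interaction (bubble_slope C q e) d \<tau>1 \<tau>2) \<le> c2 * (min \<tau>1 \<tau>2 / max \<tau>1 \<tau>2) powr d)"
proof (rule interaction_bounds[where I = C])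
  have exponent: "1 - q * e = 2 * d + 1"
    using qe by simp
  show "s powr (2 * d + 1) * bubble_slope C q e s \<le> - (C * q * e)" if "0 < s" for s
    using bubble_slope_decay_upper[OF that] by (simp only: exponent)
  show "- (C * q * e) * 2 powr (e - 1) \<le> s powr (2 * d + 1) * bubble_slope C q e s" if "1 \<le> s" for s
    using bubble_slope_decay_lower[OF that] by (simp only: exponent)
  show "0 < - (C * q * e) * 2 powr (e - 1)"
    by (rule mult_pos_pos[OF bubble_slope_factor_pos]) simp
  show "0 \<le> d"
    using qe mult_pos_neg[OF q e] by linarith
qed (use C in \<open>simp_all add: bubble_slope_nonneg nn_integral_bubble_slope\<close>)

lemma D12a_inner_rescaled_bubbles_bounds:
  assumes qe: "q * e = - 2 * d" and dim: "2 * d + 1 = real DIM('a) - 1 - 2 * a"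
  shows "\<exists>c1 c2. 0 < c1 \<and> c1 \<le> c2 \<and> (\<forall>\<tau>1 \<tau>2. 0 < \<tau>1 \<longrightarrow> 0 < \<tau>2 \<longrightarrow>
      c1 * (min \<tau>1 \<tau>2 / max \<tau>1 \<tau>2) powr d
        \<le> D12a_inner a (\<lambda>x::'a::euclidean_space. \<tau>1 powr d * bubble C q e (\<tau>1 * norm x))
             (\<lambda>x. \<tau>2 powr d * bubble C q e (\<tau>2 * norm x)) \<and>
      D12a_inner a (\<lambda>x::'a. \<tau>1 powr d * bubble C q e (\<tau>1 * norm x))
          (\<lambda>x. \<tau>2 powr d * bubble C q e (\<tau>2 * norm x))
        \<le> c2 * (min \<tau>1 \<tau>2 / max \<tau>1 \<tau>2) powr d)"
proof -
  obtain c1 c2 where "0 < c1" "c1 \<le> c2" and bounds: "\<forall>\<tau>1 \<tau>2. 0 < \<tau>1 \<longrightarrow> 0 < \<tau>2 \<longrightarrow>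
      c1 * (min \<tau>1 \<tau>2 / max \<tau>1 \<tau>2) powr d \<le> enn2real (interaction (bubble_slope C q e) d \<tau>1 \<tau>2) \<and>
      enn2real (interaction (bubble_slope C q e) d \<tau>1 \<tau>2) \<le> c2 * (min \<tau>1 \<tau>2 / max \<tau>1 \<tau>2) powr d"
    using bubble_interaction_bounds[OF qe] by blast
  define \<omega> where "\<omega> = real DIM('a) * unit_ball_vol DIM('a)"
  have "0 < \<omega>"
    by (simp add: \<omega>_def)
  with bounds have "\<forall>\<tau>1 \<tau>2. 0 < \<tau>1 \<longrightarrow> 0 < \<tau>2 \<longrightarrow>
      \<omega> * c1 * (min \<tau>1 \<tau>2 / max \<tau>1 \<tau>2) powr d
        \<le> D12a_inner a (\<lambda>x::'a. \<tau>1 powr d * bubble C q e (\<tau>1 * norm x))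
             (\<lambda>x. \<tau>2 powr d * bubble C q e (\<tau>2 * norm x)) \<and>
      D12a_inner a (\<lambda>x::'a. \<tau>1 powr d * bubble C q e (\<tau>1 * norm x))
          (\<lambda>x. \<tau>2 powr d * bubble C q e (\<tau>2 * norm x))
        \<le> \<omega> * c2 * (min \<tau>1 \<tau>2 / max \<tau>1 \<tau>2) powr d"
    by (simp add: D12a_inner_rescaled_bubbles[OF dim] \<omega>_def mult.assoc)
  moreover have "0 < \<omega> * c1" "\<omega> * c1 \<le> \<omega> * c2"
    using \<open>0 < \<omega>\<close> \<open>0 < c1\<close> \<open>c1 \<le> c2\<close> by simp_all
  ultimately show ?thesis
    by blast
qed

end

lemma W_tau_rescaled_bubble:
  assumes "N \<ge> 3" "a < a_crit N" "a \<le> b" "b < a + 1"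
  obtains C q e where "0 < C" "0 < q" "e < 0" "q * e = - 2 * (a_crit N - a)"
    and "\<And>\<tau>. 0 < \<tau> \<Longrightarrow> W_tau N a b \<tau> = (\<lambda>x. \<tau> powr (a_crit N - a) * bubble C q e (\<tau> * norm x))"
proof -
  define d p where "d = a_crit N - a" and "p = p_exp N a b"
  have "1 < p"
    using assms by (simp add: p_def p_exp_def)
  moreover have "0 < d"
    using assms by (simp add: d_def)
  ultimately show ?thesis
    by (intro that[of "(2 * (p + 1) * d\<^sup>2) powr (1 / (p - 1))" "d * (p - 1)" "- 2 / (p - 1)"])
       (simp_all add: fun_eq_iff W_tau_def W_fun_def Let_def bubble_def d_def p_def)
qed

theorem lemma5p2:
  fixes N :: nat and a b :: real
  assumes "DIM('a::euclidean_space) = N"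
    and "N \<ge> 3"
    and "a < a_crit N"
    and "a \<le> b" and "b < a + 1"
  shows "\<exists>c1 c2. 0 < c1 \<and> c1 \<le> c2 \<and>
    (\<forall>\<tau>1 \<tau>2. 0 < \<tau>1 \<longrightarrow> 0 < \<tau>2 \<longrightarrow> \<tau>1 \<noteq> \<tau>2 \<longrightarrow>
      c1 * (min \<tau>1 \<tau>2 / max \<tau>1 \<tau>2) powr (a_crit N - a)
        \<le> D12a_inner a (W_tau N a b \<tau>1 :: 'a \<Rightarrow> real) (W_tau N a b \<tau>2) \<and>
      D12a_inner a (W_tau N a b \<tau>1 :: 'a \<Rightarrow> real) (W_tau N a b \<tau>2)
        \<le> c2 * (min \<tau>1 \<tau>2 / max \<tau>1 \<tau>2) powr (a_crit N - a))"
proof -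
  obtain C q e where "0 < C" "0 < q" "e < 0" and qe: "q * e = - 2 * (a_crit N - a)"
    and W: "\<And>\<tau>. 0 < \<tau> \<Longrightarrow> W_tau N a b \<tau> = (\<lambda>x::'a. \<tau> powr (a_crit N - a) * bubble C q e (\<tau> * norm x))"
    using W_tau_rescaled_bubble assms(2-5) by blast
  have dim: "2 * (a_crit N - a) + 1 = real DIM('a) - 1 - 2 * a"
    using assms(1) by (simp add: a_crit_def field_simps)
  obtain c1 c2 where "0 < c1" "c1 \<le> c2" and bounds: "\<forall>\<tau>1 \<tau>2. 0 < \<tau>1 \<longrightarrow> 0 < \<tau>2 \<longrightarrow>
      c1 * (min \<tau>1 \<tau>2 / max \<tau>1 \<tau>2) powr (a_crit N - a)
        \<le> D12a_inner a (\<lambda>x::'a. \<tau>1 powr (a_crit N - a) * bubble C q e (\<tau>1 * norm x))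
             (\<lambda>x. \<tau>2 powr (a_crit N - a) * bubble C q e (\<tau>2 * norm x)) \<and>
      D12a_inner a (\<lambda>x::'a. \<tau>1 powr (a_crit N - a) * bubble C q e (\<tau>1 * norm x))
          (\<lambda>x. \<tau>2 powr (a_crit N - a) * bubble C q e (\<tau>2 * norm x))
        \<le> c2 * (min \<tau>1 \<tau>2 / max \<tau>1 \<tau>2) powr (a_crit N - a)"
    using D12a_inner_rescaled_bubbles_bounds[OF \<open>0 < C\<close> \<open>0 < q\<close> \<open>e < 0\<close> qe dim] by blast
  have "\<forall>\<tau>1 \<tau>2. 0 < \<tau>1 \<longrightarrow> 0 < \<tau>2 \<longrightarrow> \<tau>1 \<noteq> \<tau>2 \<longrightarrow>
      c1 * (min \<tau>1 \<tau>2 / max \<tau>1 \<tau>2) powr (a_crit N - a)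
        \<le> D12a_inner a (W_tau N a b \<tau>1 :: 'a \<Rightarrow> real) (W_tau N a b \<tau>2) \<and>
      D12a_inner a (W_tau N a b \<tau>1 :: 'a \<Rightarrow> real) (W_tau N a b \<tau>2)
        \<le> c2 * (min \<tau>1 \<tau>2 / max \<tau>1 \<tau>2) powr (a_crit N - a)"
    using bounds by (simp add: W)
  with \<open>0 < c1\<close> \<open>c1 \<le> c2\<close> show ?thesis
    by blast
qed

end
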